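(* Let $K$ be a field of characteristic zero, $W_n$ the Witt Lie algebra and $\sigma\in\mathrm{Aut}_{\mathrm{Lie}}(W_n)$. Then for every $\alpha\in\mathbb{Z}^n$ (viewed as a column vector) one has $\sigma(x^\alpha\mathcal{H}_n)=x^{A_{\sigma^{-1}}\alpha}\mathcal{H}_n$; in particular $A_{\sigma^{-1}}\alpha\in\mathbb{Z}^n$.
   Context: $W_n=\mathrm{Der}_K(K[x_1^{\pm1},\ldots,x_n^{\pm1}])=\bigoplus_{\alpha\in\mathbb{Z}^n}x^\alpha\mathcal{H}_n$, $x^\alpha=x_1^{\alpha_1}\cdots x_n^{\alpha_n}$, $\mathcal{H}_n=\bigoplus_iKH_i$, $H_i=x_i\partial_i$. Every Lie automorphism $\tau$ of $W_n$ satisfies $\tau(\mathcal{H}_n)=\mathcal{H}_n$, so there is a unique matrix $A_\tau=(a_{ij})\in\mathrm{GL}_n(K)$ with $\tau(H_i)=\sum_j a_{ij}H_j$ for all $i$, i.e. $\tau(H)=A_\tau H$ with $H=(H_1,\ldots,H_n)^T$. *)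

theory Defs
  imports "HOL-Analysis.Analysis"
begin

text \<open>The Witt algebra W_n = Der(K[x_1^{+-1},...,x_n^{+-1}]) in the basis x^alpha H_i.
  An element is a finitely supported function  w :: int^'n => 'k^'n ;  w alpha $ i is the
  coefficient of x^alpha H_i, where H_i = x_i d_i.  The dimension n is CARD('n).\<close>

definition witt :: "(int^'n \<Rightarrow> 'k::field^'n) set" where
  "witt = {w. finite {\<alpha>. w \<alpha> \<noteq> 0}}"

definition kdot :: "'k::field^'n \<Rightarrow> int^'n \<Rightarrow> 'k" where
  "kdot a \<beta> = (\<Sum>i\<in>UNIV. a $ i * of_int (\<beta> $ i))"

text \<open>Lie bracket, extended bilinearly from
  [x^alpha (a.H), x^beta (b.H)] = x^(alpha+beta) ((a.beta) (b.H) - (b.alpha) (a.H)).\<close>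
definition witt_bracket ::
  "(int^'n \<Rightarrow> 'k::field^'n) \<Rightarrow> (int^'n \<Rightarrow> 'k^'n) \<Rightarrow> (int^'n \<Rightarrow> 'k^'n)" where
  "witt_bracket v w = (\<lambda>\<gamma>. \<Sum>\<alpha>\<in>{\<alpha>. v \<alpha> \<noteq> 0}.
      kdot (v \<alpha>) (\<gamma> - \<alpha>) *s w (\<gamma> - \<alpha>) - kdot (w (\<gamma> - \<alpha>)) \<alpha> *s v \<alpha>)"

definition witt_add :: "(int^'n \<Rightarrow> 'k::field^'n) \<Rightarrow> (int^'n \<Rightarrow> 'k^'n) \<Rightarrow> (int^'n \<Rightarrow> 'k^'n)" where
  "witt_add v w = (\<lambda>\<gamma>. v \<gamma> + w \<gamma>)"

definition witt_scale :: "'k::field \<Rightarrow> (int^'n \<Rightarrow> 'k^'n) \<Rightarrow> (int^'n \<Rightarrow> 'k^'n)" where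
  "witt_scale c w = (\<lambda>\<gamma>. c *s w \<gamma>)"

definition witt_lie_aut :: "((int^'n \<Rightarrow> 'k::field^'n) \<Rightarrow> (int^'n \<Rightarrow> 'k^'n)) \<Rightarrow> bool" where
  "witt_lie_aut \<sigma> \<longleftrightarrow> bij_betw \<sigma> witt witt \<and>
     (\<forall>v\<in>witt. \<forall>w\<in>witt. \<sigma> (witt_add v w) = witt_add (\<sigma> v) (\<sigma> w)) \<and>
     (\<forall>c. \<forall>w\<in>witt. \<sigma> (witt_scale c w) = witt_scale c (\<sigma> w)) \<and>
     (\<forall>v\<in>witt. \<forall>w\<in>witt. \<sigma> (witt_bracket v w) = witt_bracket (\<sigma> v) (\<sigma> w))"

definition Hel :: "'n \<Rightarrow> (int^'n \<Rightarrow> 'k::field^'n)" where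
  "Hel i = (\<lambda>\<gamma>. if \<gamma> = 0 then axis i 1 else 0)"

definition xH :: "int^'n \<Rightarrow> (int^'n \<Rightarrow> 'k::field^'n) set" where
  "xH \<alpha> = {w. \<forall>\<gamma>. \<gamma> \<noteq> \<alpha> \<longrightarrow> w \<gamma> = 0}"

text \<open>The matrix A_tau = (a_ij) with tau(H_i) = sum_j a_ij H_j.  Since every Lie automorphism
  maps H_n into H_n (standing fact), tau(H_i) is supported at 0 and a_ij is its j-th
  coefficient there.\<close>
definition Amat :: "((int^'n \<Rightarrow> 'k::field^'n) \<Rightarrow> (int^'n \<Rightarrow> 'k^'n)) \<Rightarrow> 'k^'n^'n" where
  "Amat \<tau> = (\<chi> i j. (\<tau> (Hel i) 0) $ j)"

definition int_vec :: "int^'n \<Rightarrow> 'k::field^'n" where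
  "int_vec \<alpha> = (\<chi> i. of_int (\<alpha> $ i))"

end

theory Submission
  imports Defs
begin

text \<open>Automorphisms preserve H_n because H_n consists exactly of the ad-locally finite
  elements of W_n, a property every automorphism preserves. Then x^\<alpha> H_n is the weight space
  of ad H_n for the weight \<alpha>: the relation [\<sigma>(H_i), \<sigma>(w)] = \<alpha>_i \<sigma>(w) for w in x^\<alpha> H_n
  forces every point \<gamma> in the support of \<sigma>(w) to satisfy A_\<sigma> \<gamma> = \<alpha>, and A_\<sigma> is
  invertible with inverse A_{\<sigma>^-1}.\<close>

definition supp :: "(int^'n \<Rightarrow> 'k::field^'n) \<Rightarrow> (int^'n) set" where
  "supp w = {\<gamma>. w \<gamma> \<noteq> 0}"

definition witt_monomial :: "int^'n \<Rightarrow> 'k::field^'n \<Rightarrow> (int^'n \<Rightarrow> 'k^'n)" where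
  "witt_monomial \<beta> a = (\<lambda>\<gamma>. if \<gamma> = \<beta> then a else 0)"

definition witt_sum :: "('a \<Rightarrow> (int^'n \<Rightarrow> 'k::field^'n)) \<Rightarrow> 'a set \<Rightarrow> (int^'n \<Rightarrow> 'k^'n)" where
  "witt_sum f S = (\<lambda>\<gamma>. \<Sum>s\<in>S. f s \<gamma>)"

inductive_set witt_span :: "(int^'n \<Rightarrow> 'k::field^'n) set \<Rightarrow> (int^'n \<Rightarrow> 'k^'n) set"
  for B where
  zero: "(\<lambda>\<gamma>. 0) \<in> witt_span B"
| base: "b \<in> B \<Longrightarrow> b \<in> witt_span B"
| add: "u \<in> witt_span B \<Longrightarrow> v \<in> witt_span B \<Longrightarrow> witt_add u v \<in> witt_span B"
| scale: "u \<in> witt_span B \<Longrightarrow> witt_scale c u \<in> witt_span B"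

definition ad_locally_finite :: "(int^'n \<Rightarrow> 'k::field^'n) \<Rightarrow> bool" where
  "ad_locally_finite h \<longleftrightarrow>
     (\<forall>v\<in>witt. \<exists>B. finite B \<and> B \<subseteq> witt \<and> (\<forall>k. (witt_bracket h ^^ k) v \<in> witt_span B))"

lemma kdot_zero_left [simp]: "kdot 0 \<beta> = 0"
  by (simp add: kdot_def)

lemma kdot_zero_right [simp]: "kdot a 0 = 0"
  by (simp add: kdot_def)

lemma kdot_add_right: "kdot a (\<beta> + \<gamma>) = kdot a \<beta> + kdot a \<gamma>"
  by (simp add: kdot_def algebra_simps sum.distrib)

lemma kdot_diff_right: "kdot a (\<beta> - \<gamma>) = kdot a \<beta> - kdot a \<gamma>"
  by (simp add: kdot_def algebra_simps sum_subtractf)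

lemma kdot_scale_right: "kdot a (c *s \<beta>) = of_int c * kdot a \<beta>"
  by (simp add: kdot_def algebra_simps sum_distrib_left)

lemma kdot_scale_left: "kdot (c *s a) \<beta> = c * kdot a \<beta>"
  by (simp add: kdot_def algebra_simps sum_distrib_left)

lemma kdot_axis_left: "kdot (axis i 1) \<beta> = of_int (\<beta> $ i)"
  unfolding kdot_def axis_def by (simp add: if_distrib[of "\<lambda>x. x * _"] cong: if_cong)

lemma kdot_axis_right: "kdot a (axis i 1) = a $ i"
  unfolding kdot_def axis_def by (simp add: if_distrib[of "\<lambda>x. _ * of_int x"] cong: if_cong)

lemma kdot_eq_inner_int_vec: "kdot r \<gamma> = int_vec \<gamma> \<bullet> r"
  by (simp add: int_vec_def inner_vec_def kdot_def mult.commute)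

lemma int_vec_eq_iff: "(int_vec x :: 'k::field_char_0^'n) = int_vec y \<longleftrightarrow> x = y"
  by (simp add: int_vec_def vec_eq_iff)

lemma int_vec_eq_0_iff: "(int_vec x :: 'k::field_char_0^'n) = 0 \<longleftrightarrow> x = 0"
  by (simp add: int_vec_def vec_eq_iff)

lemma witt_iff_finite_supp: "w \<in> witt \<longleftrightarrow> finite (supp w)"
  by (simp add: witt_def supp_def)

lemma witt_if_supp_subset: "supp w \<subseteq> F \<Longrightarrow> finite F \<Longrightarrow> w \<in> witt"
  by (meson finite_subset witt_iff_finite_supp)

lemma supp_witt_add: "supp (witt_add v w) \<subseteq> supp v \<union> supp w"
  by (auto simp: supp_def witt_add_def)

lemma supp_witt_scale: "supp (witt_scale c w) \<subseteq> supp w"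
  by (auto simp: supp_def witt_scale_def)

lemma witt_bracket_eq_sum_supp:
  "witt_bracket v w \<gamma> =
     (\<Sum>\<alpha>\<in>supp v. kdot (v \<alpha>) (\<gamma> - \<alpha>) *s w (\<gamma> - \<alpha>) - kdot (w (\<gamma> - \<alpha>)) \<alpha> *s v \<alpha>)"
  by (simp add: witt_bracket_def supp_def)

lemma supp_witt_bracket:
  "supp (witt_bracket v w) \<subseteq> (\<lambda>(\<alpha>, \<beta>). \<alpha> + \<beta>) ` (supp v \<times> supp w)"
proof
  fix \<gamma> assume \<gamma>: "\<gamma> \<in> supp (witt_bracket v w)"
  show "\<gamma> \<in> (\<lambda>(\<alpha>, \<beta>). \<alpha> + \<beta>) ` (supp v \<times> supp w)"
  proof (rule ccontr)
    assume "\<gamma> \<notin> (\<lambda>(\<alpha>, \<beta>). \<alpha> + \<beta>) ` (supp v \<times> supp w)"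
    then have "w (\<gamma> - \<alpha>) = 0" if "\<alpha> \<in> supp v" for \<alpha>
      using that by (force simp: supp_def image_iff)
    then have "witt_bracket v w \<gamma> = 0"
      unfolding witt_bracket_eq_sum_supp by (intro sum.neutral) auto
    with \<gamma> show False by (simp add: supp_def)
  qed
qed

lemma witt_zero: "(\<lambda>\<gamma>. 0) \<in> witt"
  by (simp add: witt_def)

lemma witt_add_closed: "v \<in> witt \<Longrightarrow> w \<in> witt \<Longrightarrow> witt_add v w \<in> witt"
  by (meson finite_Un supp_witt_add witt_if_supp_subset witt_iff_finite_supp)

lemma witt_scale_closed: "w \<in> witt \<Longrightarrow> witt_scale c w \<in> witt"
  by (meson supp_witt_scale witt_if_supp_subset witt_iff_finite_supp)

lemma witt_bracket_closed: "v \<in> witt \<Longrightarrow> w \<in> witt \<Longrightarrow> witt_bracket v w \<in> witt"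
  unfolding witt_iff_finite_supp
  by (rule finite_subset[OF supp_witt_bracket]) (simp add: finite_SigmaI)

lemma witt_sum_closed: "finite S \<Longrightarrow> (\<And>s. s \<in> S \<Longrightarrow> f s \<in> witt) \<Longrightarrow> witt_sum f S \<in> witt"
proof (induction S rule: finite_induct)
  case empty
  then show ?case by (simp add: witt_sum_def witt_zero)
next
  case (insert x F)
  then have "witt_sum f (insert x F) = witt_add (f x) (witt_sum f F)"
    by (simp add: witt_sum_def witt_add_def)
  with insert show ?case by (simp add: witt_add_closed)
qed

lemma xH_subset_witt: "xH \<alpha> \<subseteq> witt"
proof
  fix w assume "w \<in> xH \<alpha>"
  then have "supp w \<subseteq> {\<alpha>}" by (auto simp: xH_def supp_def)
  then show "w \<in> witt" by (simp add: witt_if_supp_subset)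
qed

lemma witt_monomial_xH: "witt_monomial \<beta> a \<in> xH \<beta>"
  by (simp add: witt_monomial_def xH_def)

lemma Hel_xH: "Hel i \<in> xH 0"
  by (simp add: Hel_def xH_def)

lemma Hel_witt: "Hel i \<in> witt"
  using Hel_xH xH_subset_witt by blast

lemma inv_into_commute_unop:
  assumes bij: "bij_betw \<sigma> A A" and closed: "\<And>x. x \<in> A \<Longrightarrow> g x \<in> A"
    and comm: "\<And>x. x \<in> A \<Longrightarrow> \<sigma> (g x) = g (\<sigma> x)" and x: "x \<in> A"
  shows "inv_into A \<sigma> (g x) = g (inv_into A \<sigma> x)"
proof -
  let ?t = "inv_into A \<sigma>"
  have tx: "?t x \<in> A" using bij x by (meson bij_betw_apply bij_betw_inv_into)
  have "\<sigma> (g (?t x)) = g x"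
    using comm[OF tx] bij_betw_inv_into_right[OF bij x] by simp
  then have "?t (g x) = ?t (\<sigma> (g (?t x)))" by simp
  also have "\<dots> = g (?t x)" using bij_betw_inv_into_left[OF bij closed[OF tx]] .
  finally show ?thesis .
qed

lemma inv_into_commute_binop:
  assumes bij: "bij_betw \<sigma> A A" and closed: "\<And>x y. x \<in> A \<Longrightarrow> y \<in> A \<Longrightarrow> f x y \<in> A"
    and comm: "\<And>x y. x \<in> A \<Longrightarrow> y \<in> A \<Longrightarrow> \<sigma> (f x y) = f (\<sigma> x) (\<sigma> y)"
    and x: "x \<in> A" and y: "y \<in> A"
  shows "inv_into A \<sigma> (f x y) = f (inv_into A \<sigma> x) (inv_into A \<sigma> y)"
proof -
  let ?t = "inv_into A \<sigma>"
  have tx: "?t x \<in> A" and ty: "?t y \<in> A"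
    using bij x y by (meson bij_betw_apply bij_betw_inv_into)+
  have "\<sigma> (f (?t x) (?t y)) = f x y"
    using comm[OF tx ty] bij_betw_inv_into_right[OF bij] x y by simp
  then have "?t (f x y) = ?t (\<sigma> (f (?t x) (?t y)))" by simp
  also have "\<dots> = f (?t x) (?t y)" using bij_betw_inv_into_left[OF bij closed[OF tx ty]] .
  finally show ?thesis .
qed

lemma
  assumes "witt_lie_aut \<sigma>"
  shows witt_lie_aut_closed: "w \<in> witt \<Longrightarrow> \<sigma> w \<in> witt"
    and witt_lie_aut_add: "v \<in> witt \<Longrightarrow> w \<in> witt \<Longrightarrow> \<sigma> (witt_add v w) = witt_add (\<sigma> v) (\<sigma> w)"
    and witt_lie_aut_scale: "w \<in> witt \<Longrightarrow> \<sigma> (witt_scale c w) = witt_scale c (\<sigma> w)"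
    and witt_lie_aut_bracket:
      "v \<in> witt \<Longrightarrow> w \<in> witt \<Longrightarrow> \<sigma> (witt_bracket v w) = witt_bracket (\<sigma> v) (\<sigma> w)"
proof -
  note aut = assms[unfolded witt_lie_aut_def]
  show "w \<in> witt \<Longrightarrow> \<sigma> w \<in> witt" using aut bij_betw_apply by metis
  show "v \<in> witt \<Longrightarrow> w \<in> witt \<Longrightarrow> \<sigma> (witt_add v w) = witt_add (\<sigma> v) (\<sigma> w)"
    using aut by simp
  show "w \<in> witt \<Longrightarrow> \<sigma> (witt_scale c w) = witt_scale c (\<sigma> w)"
    using aut by simp
  show "v \<in> witt \<Longrightarrow> w \<in> witt \<Longrightarrow> \<sigma> (witt_bracket v w) = witt_bracket (\<sigma> v) (\<sigma> w)"
    using aut by simp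
qed

lemma witt_lie_aut_inv_into:
  assumes "witt_lie_aut \<sigma>"
  shows "witt_lie_aut (inv_into witt \<sigma>)"
proof -
  have bij: "bij_betw \<sigma> witt witt" using assms unfolding witt_lie_aut_def by blast
  note commute_binop = inv_into_commute_binop[OF bij] and commute_unop = inv_into_commute_unop[OF bij]
  show ?thesis
    unfolding witt_lie_aut_def
    using bij_betw_inv_into[OF bij]
      commute_binop[of witt_add, OF witt_add_closed witt_lie_aut_add[OF assms]]
      commute_binop[of witt_bracket, OF witt_bracket_closed witt_lie_aut_bracket[OF assms]]
      commute_unop[of "witt_scale _", OF witt_scale_closed witt_lie_aut_scale[OF assms]]
    by blast
qed

lemma witt_lie_aut_zero:
  assumes "witt_lie_aut \<sigma>"
  shows "\<sigma> (\<lambda>\<gamma>. 0) = (\<lambda>\<gamma>. 0)"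
  using witt_lie_aut_scale[OF assms witt_zero, of 0] by (simp add: witt_scale_def)

lemma witt_lie_aut_nonzero:
  assumes "witt_lie_aut \<sigma>" "w \<in> witt" "w \<noteq> (\<lambda>\<gamma>. 0)"
  shows "\<sigma> w \<noteq> (\<lambda>\<gamma>. 0)"
proof
  assume "\<sigma> w = (\<lambda>\<gamma>. 0)"
  then have "\<sigma> w = \<sigma> (\<lambda>\<gamma>. 0)" using witt_lie_aut_zero[OF assms(1)] by simp
  moreover have "inj_on \<sigma> witt" using assms(1) by (simp add: witt_lie_aut_def bij_betw_def)
  ultimately show False using inj_onD[OF _ _ assms(2) witt_zero] assms(3) by blast
qed

lemma witt_lie_aut_witt_sum:
  assumes "witt_lie_aut \<sigma>"
  shows "finite S \<Longrightarrow> (\<And>s. s \<in> S \<Longrightarrow> f s \<in> witt) \<Longrightarrow>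
    \<sigma> (witt_sum f S) = witt_sum (\<lambda>s. \<sigma> (f s)) S"
proof (induction S rule: finite_induct)
  case empty
  then show ?case using witt_lie_aut_zero[OF assms] by (simp add: witt_sum_def)
next
  case (insert x F)
  have split: "witt_sum g (insert x F) = witt_add (g x) (witt_sum g F)" for g
    using insert by (simp add: witt_sum_def witt_add_def)
  have "f x \<in> witt" "witt_sum f F \<in> witt" using insert witt_sum_closed by auto
  with insert show ?case
    unfolding split by (simp add: witt_lie_aut_add[OF assms])
qed

lemma witt_span_subset_witt: "B \<subseteq> witt \<Longrightarrow> witt_span B \<subseteq> witt"
proof
  show "u \<in> witt_span B \<Longrightarrow> B \<subseteq> witt \<Longrightarrow> u \<in> witt" for u
    by (induction rule: witt_span.induct) (auto simp: witt_zero witt_add_closed witt_scale_closed)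
qed

lemma supp_witt_span: "u \<in> witt_span B \<Longrightarrow> supp u \<subseteq> \<Union> (supp ` B)"
proof (induction rule: witt_span.induct)
  case (add u v)
  then show ?case using supp_witt_add[of u v] by blast
next
  case (scale u c)
  then show ?case using supp_witt_scale[of c u] by blast
qed (auto simp: supp_def)

lemma witt_span_witt_sum:
  "finite S \<Longrightarrow> (\<And>s. s \<in> S \<Longrightarrow> f s \<in> witt_span B) \<Longrightarrow> witt_sum f S \<in> witt_span B"
proof (induction S rule: finite_induct)
  case empty
  then show ?case using witt_span.zero by (simp add: witt_sum_def)
next
  case (insert x F)
  then have "witt_sum f (insert x F) = witt_add (f x) (witt_sum f F)"
    by (simp add: witt_sum_def witt_add_def)
  with insert show ?case by (simp add: witt_span.add)
qed

lemma witt_lie_aut_image_span: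
  assumes "witt_lie_aut \<sigma>" "B \<subseteq> witt"
  shows "u \<in> witt_span B \<Longrightarrow> \<sigma> u \<in> witt_span (\<sigma> ` B)"
proof (induction rule: witt_span.induct)
  case zero
  then show ?case using witt_lie_aut_zero[OF assms(1)] witt_span.zero by simp
next
  case (base b)
  then show ?case by (simp add: witt_span.base)
next
  case (add u v)
  then have "u \<in> witt" "v \<in> witt" using witt_span_subset_witt assms(2) by auto
  with add show ?case by (simp add: witt_lie_aut_add[OF assms(1)] witt_span.add)
next
  case (scale u c)
  then have "u \<in> witt" using witt_span_subset_witt assms(2) by auto
  with scale show ?case by (simp add: witt_lie_aut_scale[OF assms(1)] witt_span.scale)
qed

lemma witt_lie_aut_ad_power:
  assumes "witt_lie_aut \<sigma>" "h \<in> witt" "v \<in> witt"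
  shows "\<sigma> ((witt_bracket h ^^ k) v) = (witt_bracket (\<sigma> h) ^^ k) (\<sigma> v)"
proof (induction k)
  case (Suc k)
  have "(witt_bracket h ^^ k) v \<in> witt"
    using assms(2,3) by (induction k) (auto simp: witt_bracket_closed)
  with Suc show ?case by (simp add: witt_lie_aut_bracket[OF assms(1,2)])
qed simp

lemma witt_bracket_xH0:
  assumes "h \<in> xH 0"
  shows "witt_bracket h u \<gamma> = kdot (h 0) \<gamma> *s u \<gamma>"
proof (cases "h 0 = 0")
  case True
  then have "{\<alpha>. h \<alpha> \<noteq> 0} = {}" using assms by (auto simp: xH_def) metis
  with True show ?thesis by (simp add: witt_bracket_def)
next
  case False
  then have "{\<alpha>. h \<alpha> \<noteq> 0} = {0}" using assms by (auto simp: xH_def)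
  then show ?thesis by (simp add: witt_bracket_def)
qed

lemma witt_bracket_Hel:
  assumes "w \<in> xH \<alpha>"
  shows "witt_bracket (Hel i) w = witt_scale (of_int (\<alpha> $ i)) w"
proof
  fix \<gamma>
  have "witt_bracket (Hel i) w \<gamma> = kdot (Hel i 0) \<gamma> *s w \<gamma>"
    by (rule witt_bracket_xH0[OF Hel_xH])
  then have "witt_bracket (Hel i) w \<gamma> = of_int (\<gamma> $ i) *s w \<gamma>"
    by (simp add: Hel_def kdot_axis_left)
  then show "witt_bracket (Hel i) w \<gamma> = witt_scale (of_int (\<alpha> $ i)) w \<gamma>"
    using assms by (cases "\<gamma> = \<alpha>") (auto simp: witt_scale_def xH_def)
qed

lemma witt_span_pointwise_scale:
  assumes "v \<in> witt"
  shows "(\<lambda>\<gamma>. c \<gamma> *s v \<gamma>) \<in> witt_span ((\<lambda>\<beta>. witt_monomial \<beta> (v \<beta>)) ` supp v)"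
proof -
  have fin: "finite (supp v)" using assms witt_iff_finite_supp by blast
  have "(\<lambda>\<gamma>. c \<gamma> *s v \<gamma>) = witt_sum (\<lambda>\<beta>. witt_scale (c \<beta>) (witt_monomial \<beta> (v \<beta>))) (supp v)"
  proof
    fix \<gamma>
    have "witt_sum (\<lambda>\<beta>. witt_scale (c \<beta>) (witt_monomial \<beta> (v \<beta>))) (supp v) \<gamma>
        = (\<Sum>\<beta>\<in>supp v. if \<gamma> = \<beta> then c \<gamma> *s v \<gamma> else 0)"
      unfolding witt_sum_def witt_scale_def witt_monomial_def by (intro sum.cong) auto
    also have "\<dots> = c \<gamma> *s v \<gamma>" using fin by (simp add: supp_def)
    finally show "c \<gamma> *s v \<gamma> = witt_sum (\<lambda>\<beta>. witt_scale (c \<beta>) (witt_monomial \<beta> (v \<beta>))) (supp v) \<gamma>"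
      by simp
  qed
  also have "\<dots> \<in> witt_span ((\<lambda>\<beta>. witt_monomial \<beta> (v \<beta>)) ` supp v)"
    using fin by (intro witt_span_witt_sum witt_span.scale witt_span.base) auto
  finally show ?thesis .
qed

lemma ad_locally_finite_xH0:
  fixes h :: "int^'n \<Rightarrow> 'k::field^'n"
  assumes "h \<in> xH 0"
  shows "ad_locally_finite h"
  unfolding ad_locally_finite_def
proof
  fix v :: "int^'n \<Rightarrow> 'k^'n" assume v: "v \<in> witt"
  let ?B = "(\<lambda>\<beta>. witt_monomial \<beta> (v \<beta>)) ` supp v"
  have "(witt_bracket h ^^ k) v = (\<lambda>\<gamma>. kdot (h 0) \<gamma> ^ k *s v \<gamma>)" for k
    by (induction k) (auto simp: witt_bracket_xH0[OF assms])
  then have "(witt_bracket h ^^ k) v \<in> witt_span ?B" for k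
    using witt_span_pointwise_scale[OF v] by simp
  moreover have "finite ?B" using v witt_iff_finite_supp by blast
  moreover have "?B \<subseteq> witt" using witt_monomial_xH xH_subset_witt by blast
  ultimately show "\<exists>B. finite B \<and> B \<subseteq> witt \<and> (\<forall>k. (witt_bracket h ^^ k) v \<in> witt_span B)"
    by blast
qed

lemma ad_locally_finite_image:
  fixes \<sigma> :: "(int^'n \<Rightarrow> 'k::field^'n) \<Rightarrow> (int^'n \<Rightarrow> 'k^'n)"
  assumes \<sigma>: "witt_lie_aut \<sigma>" and h: "h \<in> witt" "ad_locally_finite h"
  shows "ad_locally_finite (\<sigma> h)"
  unfolding ad_locally_finite_def
proof
  fix v :: "int^'n \<Rightarrow> 'k^'n" assume v: "v \<in> witt"
  let ?u = "inv_into witt \<sigma> v"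
  have bij: "bij_betw \<sigma> witt witt" using \<sigma> by (simp add: witt_lie_aut_def)
  have u: "?u \<in> witt" and \<sigma>u: "\<sigma> ?u = v"
    using v bij_betw_inv_into_right[OF bij] witt_lie_aut_closed[OF witt_lie_aut_inv_into[OF \<sigma>]]
    by auto
  obtain B where B: "finite B" "B \<subseteq> witt" "\<And>k. (witt_bracket h ^^ k) ?u \<in> witt_span B"
    using h(2) u unfolding ad_locally_finite_def by blast
  have "(witt_bracket (\<sigma> h) ^^ k) v \<in> witt_span (\<sigma> ` B)" for k
    using witt_lie_aut_image_span[OF \<sigma> B(2) B(3)[of k]]
    by (simp add: witt_lie_aut_ad_power[OF \<sigma> h(1) u] \<sigma>u)
  moreover have "\<sigma> ` B \<subseteq> witt" using B(2) witt_lie_aut_closed[OF \<sigma>] by blast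
  ultimately show "\<exists>B. finite B \<and> B \<subseteq> witt \<and> (\<forall>k. (witt_bracket (\<sigma> h) ^^ k) v \<in> witt_span B)"
    using B(1) by blast
qed

lemma exists_vector_avoiding_hyperplanes:
  fixes p :: "'a::euclidean_space"
  assumes "finite D" "0 \<notin> D" "p \<noteq> 0"
  shows "\<exists>r. p \<bullet> r > 0 \<and> (\<forall>d\<in>D. d \<bullet> r \<noteq> 0)"
proof (rule ccontr)
  assume "\<not> ?thesis"
  then have "{r. p \<bullet> r > 0} \<subseteq> (\<Union>d\<in>D. {r. d \<bullet> r = 0})" by auto
  moreover have "negligible (\<Union>d\<in>D. {r. d \<bullet> r = 0})"
    using assms(1,2) by (intro negligible_Union) (auto intro!: negligible_hyperplane)
  moreover have "{r. p \<bullet> r > 0} \<noteq> {}" using assms(3) by (auto intro!: exI[of _ p])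
  then have "\<not> negligible {r. p \<bullet> r > 0}" by (intro open_not_negligible open_halfspace_gt)
  ultimately show False using negligible_subset by blast
qed

text \<open>A generic real functional separates the points of S, so it has a unique maximum there.\<close>
lemma exists_functional_strict_max:
  fixes S :: "(int^'n) set"
  assumes S: "finite S" and \<alpha>0: "\<alpha>0 \<in> S" "\<alpha>0 \<noteq> 0"
  shows "\<exists>(r :: real^'n) \<alpha>. \<alpha> \<in> S \<and> \<alpha> \<noteq> 0 \<and> (\<forall>s\<in>S. s \<noteq> \<alpha> \<longrightarrow> kdot r s < kdot r \<alpha>)"
proof -
  let ?P = "{(s, s'). s \<in> S \<and> s' \<in> S \<and> s \<noteq> s'}"
  let ?D = "(\<lambda>(s, s'). int_vec (s - s') :: real^'n) ` ?P"
  have "?P \<subseteq> S \<times> S" by blast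
  then have "finite ?D" using S by (meson finite_SigmaI finite_imageI finite_subset)
  moreover have "0 \<notin> ?D"
  proof
    assume "0 \<in> ?D"
    then obtain s s' where "s \<noteq> s'" "int_vec (s - s') = (0 :: real^'n)" by auto
    then show False by (simp add: int_vec_eq_0_iff)
  qed
  moreover have "int_vec \<alpha>0 \<noteq> (0 :: real^'n)" using \<alpha>0(2) by (simp add: int_vec_eq_0_iff)
  ultimately have "\<exists>r. int_vec \<alpha>0 \<bullet> r > 0 \<and> (\<forall>d\<in>?D. d \<bullet> r \<noteq> 0)"
    by (rule exists_vector_avoiding_hyperplanes)
  then obtain r where r: "int_vec \<alpha>0 \<bullet> r > 0" "\<forall>d\<in>?D. d \<bullet> r \<noteq> 0"
    by blast
  define f where "f = kdot r"
  have f_inj: "f s \<noteq> f s'" if "s \<in> S" "s' \<in> S" "s \<noteq> s'" for s s'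
  proof -
    have "int_vec (s - s') \<in> ?D" using that by (auto intro!: image_eqI[of _ _ "(s, s')"])
    with r(2) have "int_vec (s - s') \<bullet> r \<noteq> 0" by (rule bspec)
    then have "kdot r (s - s') \<noteq> 0" by (simp add: kdot_eq_inner_int_vec)
    then show ?thesis by (simp add: f_def kdot_diff_right)
  qed
  have "Max (f ` S) \<in> f ` S" using S \<alpha>0(1) by (intro Max_in) auto
  then obtain \<alpha> where \<alpha>: "Max (f ` S) = f \<alpha>" "\<alpha> \<in> S" by (rule imageE)
  have le: "f s \<le> f \<alpha>" if "s \<in> S" for s
    unfolding \<alpha>(1)[symmetric] using S that by simp
  have "f \<alpha> > 0" using le[OF \<alpha>0(1)] r(1) by (simp add: f_def kdot_eq_inner_int_vec)
  then have "\<alpha> \<noteq> 0" by (auto simp: f_def)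
  moreover have "f s < f \<alpha>" if "s \<in> S" "s \<noteq> \<alpha>" for s
    using le[OF that(1)] f_inj[OF that(1) \<alpha>(2) that(2)] by linarith
  ultimately show ?thesis
    using \<alpha>(2) unfolding f_def by (intro exI[of _ r] exI[of _ \<alpha>]) simp
qed

text \<open>This is where characteristic zero enters.\<close>
lemma exists_nonresonant_shift:
  fixes a :: "'k::field_char_0^'n"
  assumes "a \<noteq> 0"
  shows "\<exists>\<beta>. \<forall>k::nat. kdot a (\<beta> + int k *s \<alpha>) \<noteq> kdot a \<alpha>"
proof (cases "kdot a \<alpha> = 0")
  case True
  obtain i where "a $ i \<noteq> 0" using assms by (auto simp: vec_eq_iff)
  with True show ?thesis
    by (intro exI[of _ "axis i 1"]) (simp add: kdot_add_right kdot_scale_right kdot_axis_right)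
next
  case False
  show ?thesis
  proof (intro exI allI)
    fix k
    have "kdot a ((\<alpha> + \<alpha>) + int k *s \<alpha>) - kdot a \<alpha> = of_nat (Suc k) * kdot a \<alpha>"
      by (simp only: kdot_add_right kdot_scale_right) (simp add: algebra_simps)
    also have "\<dots> \<noteq> 0" using False by (simp del: of_nat_Suc)
    finally show "kdot a ((\<alpha> + \<alpha>) + int k *s \<alpha>) \<noteq> kdot a \<alpha>" by simp
  qed
qed

lemma ad_power_supp_bound:
  fixes r :: "real^'n"
  assumes h: "\<And>s. h s \<noteq> 0 \<Longrightarrow> kdot r s \<le> m" and v: "\<And>\<gamma>. v \<gamma> \<noteq> 0 \<Longrightarrow> kdot r \<gamma> \<le> c"
  shows "(witt_bracket h ^^ k) v \<gamma> \<noteq> 0 \<Longrightarrow> kdot r \<gamma> \<le> c + real k * m"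
proof (induction k arbitrary: \<gamma>)
  case 0
  then show ?case using v by simp
next
  case (Suc k)
  then have "\<gamma> \<in> supp (witt_bracket h ((witt_bracket h ^^ k) v))" by (simp add: supp_def)
  then have "\<gamma> \<in> (\<lambda>(\<alpha>, \<beta>). \<alpha> + \<beta>) ` (supp h \<times> supp ((witt_bracket h ^^ k) v))"
    using supp_witt_bracket by blast
  then obtain s \<delta> where "\<gamma> = s + \<delta>" "s \<in> supp h" "\<delta> \<in> supp ((witt_bracket h ^^ k) v)"
    by auto
  moreover from this have "kdot r s \<le> m" "kdot r \<delta> \<le> c + real k * m"
    using h Suc.IH by (simp_all add: supp_def)
  ultimately show ?case by (simp add: kdot_add_right algebra_simps)
qed

text \<open>Only the top term of h (for the functional r) reaches the extreme point
  \<beta> + k \<alpha>, so there the coefficient is an explicit product.\<close>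
lemma ad_power_witt_monomial_extreme:
  fixes h :: "int^'n \<Rightarrow> 'k::field^'n" and r :: "real^'n"
  assumes h: "h \<in> witt" "h \<alpha> \<noteq> 0"
    and max: "\<And>s. h s \<noteq> 0 \<Longrightarrow> s \<noteq> \<alpha> \<Longrightarrow> kdot r s < kdot r \<alpha>"
  shows "(witt_bracket h ^^ k) (witt_monomial \<beta> (h \<alpha>)) (\<beta> + int k *s \<alpha>)
    = (\<Prod>j<k. kdot (h \<alpha>) (\<beta> + int j *s \<alpha>) - kdot (h \<alpha>) \<alpha>) *s h \<alpha>"
proof (induction k)
  case 0
  then show ?case by (simp add: witt_monomial_def)
next
  case (Suc k)
  define a where "a = h \<alpha>"
  let ?u = "(witt_bracket h ^^ k) (witt_monomial \<beta> a)"
  let ?P = "\<Prod>j<k. kdot a (\<beta> + int j *s \<alpha>) - kdot a \<alpha>"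
  let ?g = "\<beta> + int (Suc k) *s \<alpha>"
  have le: "kdot r s \<le> kdot r \<alpha>" if "h s \<noteq> 0" for s
    using max[OF that] by (cases "s = \<alpha>") auto
  have init: "kdot r \<gamma> \<le> kdot r \<beta>" if "witt_monomial \<beta> a \<gamma> \<noteq> 0" for \<gamma>
    using that by (simp add: witt_monomial_def split: if_splits)
  have above: "?u \<gamma> = 0" if "kdot r \<beta> + real k * kdot r \<alpha> < kdot r \<gamma>" for \<gamma>
  proof (rule ccontr)
    assume "?u \<gamma> \<noteq> 0"
    from ad_power_supp_bound[where v = "witt_monomial \<beta> a", OF le init this] that
    show False by simp
  qed
  have other: "?u (?g - s) = 0" if "h s \<noteq> 0" "s \<noteq> \<alpha>" for s
  proof (rule above)
    have "kdot r ?g = kdot r \<beta> + (real k + 1) * kdot r \<alpha>"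
      by (simp add: kdot_add_right kdot_scale_right algebra_simps)
    then show "kdot r \<beta> + real k * kdot r \<alpha> < kdot r (?g - s)"
      using max[OF that] by (simp add: kdot_diff_right algebra_simps)
  qed
  have g_minus: "?g - \<alpha> = \<beta> + int k *s \<alpha>"
    by (simp add: vec_eq_iff algebra_simps)
  have "witt_bracket h ?u ?g = (\<Sum>s\<in>supp h.
      if s = \<alpha> then kdot a (?g - \<alpha>) *s ?u (?g - \<alpha>) - kdot (?u (?g - \<alpha>)) \<alpha> *s a else 0)"
    unfolding witt_bracket_eq_sum_supp[of h ?u ?g]
    using other by (intro sum.cong) (auto simp: a_def supp_def)
  also have "\<dots> = kdot a (\<beta> + int k *s \<alpha>) *s (?P *s a) - kdot (?P *s a) \<alpha> *s a"
    using h Suc.IH by (simp add: witt_iff_finite_supp supp_def g_minus a_def)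
  also have "\<dots> = (?P * (kdot a (\<beta> + int k *s \<alpha>) - kdot a \<alpha>)) *s a"
    by (simp add: kdot_scale_left algebra_simps)
  finally show ?case by (simp add: a_def)
qed

text \<open>If h had a term x^\<alpha> (h \<alpha>) with \<alpha> \<noteq> 0, take \<alpha> extreme for a generic functional: then
  iterating ad h on a suitable monomial produces the nonzero coefficients at \<beta> + k \<alpha> for all k,
  which cannot lie in the span of finitely many elements.\<close>
lemma xH0_if_ad_locally_finite:
  fixes h :: "int^'n \<Rightarrow> 'k::field_char_0^'n"
  assumes h: "h \<in> witt" "ad_locally_finite h"
  shows "h \<in> xH 0"
proof (rule ccontr)
  assume "h \<notin> xH 0"
  then obtain \<alpha>0 where \<alpha>0: "\<alpha>0 \<in> supp h" "\<alpha>0 \<noteq> 0" by (auto simp: xH_def supp_def)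
  have "finite (supp h)" using h(1) witt_iff_finite_supp by blast
  from exists_functional_strict_max[OF this \<alpha>0]
  obtain r :: "real^'n" and \<alpha> where \<alpha>: "\<alpha> \<in> supp h" "\<alpha> \<noteq> 0"
    and max: "\<forall>s\<in>supp h. s \<noteq> \<alpha> \<longrightarrow> kdot r s < kdot r \<alpha>"
    by blast
  define a where "a = h \<alpha>"
  have a: "a \<noteq> 0" using \<alpha>(1) by (simp add: a_def supp_def)
  have max': "\<And>s. h s \<noteq> 0 \<Longrightarrow> s \<noteq> \<alpha> \<Longrightarrow> kdot r s < kdot r \<alpha>"
    using max by (simp add: supp_def)
  obtain \<beta> where \<beta>: "\<And>k::nat. kdot a (\<beta> + int k *s \<alpha>) \<noteq> kdot a \<alpha>"
    using exists_nonresonant_shift[OF a] by blast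
  have "witt_monomial \<beta> a \<in> witt" using witt_monomial_xH xH_subset_witt by blast
  with h(2) obtain B where B: "finite B" "B \<subseteq> witt"
    "\<And>k. (witt_bracket h ^^ k) (witt_monomial \<beta> a) \<in> witt_span B"
    unfolding ad_locally_finite_def by blast
  have "range (\<lambda>k::nat. \<beta> + int k *s \<alpha>) \<subseteq> \<Union> (supp ` B)"
  proof (rule image_subsetI)
    fix k
    have "(\<Prod>j<k. kdot a (\<beta> + int j *s \<alpha>) - kdot a \<alpha>) \<noteq> 0" using \<beta> by simp
    then have "(witt_bracket h ^^ k) (witt_monomial \<beta> a) (\<beta> + int k *s \<alpha>) \<noteq> 0"
      using ad_power_witt_monomial_extreme[OF h(1) a[unfolded a_def] max', where \<beta> = \<beta> and k = k] a
      by (simp add: a_def)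
    then show "\<beta> + int k *s \<alpha> \<in> \<Union> (supp ` B)"
      using supp_witt_span[OF B(3)] by (auto simp: supp_def)
  qed
  moreover have "finite (\<Union> (supp ` B))" using B witt_iff_finite_supp by auto
  ultimately have "finite (range (\<lambda>k::nat. \<beta> + int k *s \<alpha>))" by (rule finite_subset)
  moreover have "inj (\<lambda>k::nat. \<beta> + int k *s \<alpha>)"
  proof
    fix k l :: nat
    assume "\<beta> + int k *s \<alpha> = \<beta> + int l *s \<alpha>"
    then have "(int k - int l) *s \<alpha> = 0" by (simp add: vector_sub_rdistrib)
    then have "int k - int l = 0" using \<alpha>(2) vector_mul_eq_0 by blast
    then show "k = l" by simp
  qed
  ultimately have "finite (UNIV :: nat set)" by (rule finite_imageD)
  then show False by simp
qed

lemma witt_lie_aut_xH0: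
  fixes \<sigma> :: "(int^'n \<Rightarrow> 'k::field_char_0^'n) \<Rightarrow> (int^'n \<Rightarrow> 'k^'n)"
  assumes "witt_lie_aut \<sigma>" "h \<in> xH 0"
  shows "\<sigma> h \<in> xH 0"
proof -
  have "h \<in> witt" using assms(2) xH_subset_witt by blast
  then show ?thesis
    using xH0_if_ad_locally_finite witt_lie_aut_closed[OF assms(1)]
      ad_locally_finite_image[OF assms(1) _ ad_locally_finite_xH0[OF assms(2)]] by blast
qed

lemma witt_lie_aut_weight:
  fixes \<sigma> :: "(int^'n \<Rightarrow> 'k::field_char_0^'n) \<Rightarrow> (int^'n \<Rightarrow> 'k^'n)"
  assumes \<sigma>: "witt_lie_aut \<sigma>" and w: "w \<in> xH \<alpha>" and nz: "\<sigma> w \<gamma> \<noteq> 0"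
  shows "Amat \<sigma> *v int_vec \<gamma> = int_vec \<alpha>"
proof -
  have "w \<in> witt" using w xH_subset_witt by blast
  have "kdot (\<sigma> (Hel i) 0) \<gamma> = of_int (\<alpha> $ i)" for i
  proof -
    have "witt_bracket (\<sigma> (Hel i)) (\<sigma> w) = \<sigma> (witt_bracket (Hel i) w)"
      using witt_lie_aut_bracket[OF \<sigma> Hel_witt \<open>w \<in> witt\<close>] by simp
    also have "\<dots> = witt_scale (of_int (\<alpha> $ i)) (\<sigma> w)"
      using witt_lie_aut_scale[OF \<sigma> \<open>w \<in> witt\<close>] by (simp add: witt_bracket_Hel[OF w])
    finally have "kdot (\<sigma> (Hel i) 0) \<gamma> *s \<sigma> w \<gamma> = of_int (\<alpha> $ i) *s \<sigma> w \<gamma>"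
      using witt_bracket_xH0[OF witt_lie_aut_xH0[OF \<sigma> Hel_xH]]
      by (metis witt_scale_def)
    then show ?thesis using nz by simp
  qed
  then show ?thesis
    by (simp add: vec_eq_iff matrix_vector_mult_def Amat_def int_vec_def kdot_def)
qed

lemma witt_lie_aut_Hel_expansion:
  fixes \<tau> :: "(int^'n \<Rightarrow> 'k::field_char_0^'n) \<Rightarrow> (int^'n \<Rightarrow> 'k^'n)"
  assumes "witt_lie_aut \<tau>"
  shows "\<tau> (Hel i) = witt_sum (\<lambda>j. witt_scale (Amat \<tau> $ i $ j) (Hel j)) UNIV"
proof
  fix \<gamma>
  have "\<tau> (Hel i) \<in> xH 0" using witt_lie_aut_xH0[OF assms Hel_xH] .
  moreover have "(\<Sum>j\<in>UNIV. (\<tau> (Hel i) 0 $ j) *s axis j 1) = \<tau> (Hel i) 0"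
    by (rule basis_expansion)
  ultimately show "\<tau> (Hel i) \<gamma> = witt_sum (\<lambda>j. witt_scale (Amat \<tau> $ i $ j) (Hel j)) UNIV \<gamma>"
    by (cases "\<gamma> = 0") (simp_all add: witt_sum_def witt_scale_def Hel_def Amat_def xH_def)
qed

lemma Amat_mult_eq_1:
  fixes \<sigma> \<tau> :: "(int^'n \<Rightarrow> 'k::field_char_0^'n) \<Rightarrow> (int^'n \<Rightarrow> 'k^'n)"
  assumes \<sigma>: "witt_lie_aut \<sigma>" and \<tau>: "witt_lie_aut \<tau>"
    and inverse: "\<And>x. x \<in> witt \<Longrightarrow> \<sigma> (\<tau> x) = x"
  shows "Amat \<tau> ** Amat \<sigma> = mat 1"
proof -
  have row: "(\<Sum>j\<in>UNIV. Amat \<tau> $ i $ j *s Amat \<sigma> $ j) = axis i 1" for i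
  proof -
    have "Hel i = \<sigma> (\<tau> (Hel i))" using inverse[OF Hel_witt] by simp
    also have "\<dots> = witt_sum (\<lambda>j. \<sigma> (witt_scale (Amat \<tau> $ i $ j) (Hel j))) UNIV"
      unfolding witt_lie_aut_Hel_expansion[OF \<tau>]
      by (rule witt_lie_aut_witt_sum[OF \<sigma>]) (simp_all add: witt_scale_closed Hel_witt)
    also have "\<dots> = witt_sum (\<lambda>j. witt_scale (Amat \<tau> $ i $ j) (\<sigma> (Hel j))) UNIV"
      by (simp add: witt_lie_aut_scale[OF \<sigma> Hel_witt])
    finally have "Hel i 0 = witt_sum (\<lambda>j. witt_scale (Amat \<tau> $ i $ j) (\<sigma> (Hel j))) UNIV 0"
      by simp
    then show ?thesis by (simp add: Hel_def witt_sum_def witt_scale_def Amat_def)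
  qed
  show ?thesis
    unfolding vec_eq_iff
  proof (intro allI)
    fix i k
    have "(Amat \<tau> ** Amat \<sigma>) $ i $ k = (\<Sum>j\<in>UNIV. Amat \<tau> $ i $ j *s Amat \<sigma> $ j) $ k"
      by (simp add: matrix_matrix_mult_def sum_component)
    then show "(Amat \<tau> ** Amat \<sigma>) $ i $ k = mat 1 $ i $ k"
      using row[of i] by (simp add: axis_def mat_def)
  qed
qed

lemma witt_lie_aut_image_xH_subset:
  fixes \<sigma> :: "(int^'n \<Rightarrow> 'k::field_char_0^'n) \<Rightarrow> (int^'n \<Rightarrow> 'k^'n)"
  assumes \<sigma>: "witt_lie_aut \<sigma>" and left_inverse: "B ** Amat \<sigma> = mat 1"
    and \<beta>: "B *v int_vec \<alpha> = int_vec \<beta>"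
  shows "\<sigma> ` xH \<alpha> \<subseteq> xH \<beta>"
proof (rule image_subsetI)
  fix w :: "int^'n \<Rightarrow> 'k^'n" assume w: "w \<in> xH \<alpha>"
  have "\<gamma> = \<beta>" if "\<sigma> w \<gamma> \<noteq> 0" for \<gamma>
  proof -
    have "int_vec \<gamma> = B *v (Amat \<sigma> *v int_vec \<gamma>)"
      by (simp add: matrix_vector_mul_assoc left_inverse)
    also have "\<dots> = int_vec \<beta>" using witt_lie_aut_weight[OF \<sigma> w that] \<beta> by simp
    finally show ?thesis by (simp add: int_vec_eq_iff)
  qed
  then show "\<sigma> w \<in> xH \<beta>" by (auto simp: xH_def)
qed

lemma witt_lie_aut_weight_preimage:
  fixes \<sigma> :: "(int^'n \<Rightarrow> 'k::field_char_0^'n) \<Rightarrow> (int^'n \<Rightarrow> 'k^'n)"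
  assumes \<sigma>: "witt_lie_aut \<sigma>"
  obtains \<beta> where "Amat \<sigma> *v int_vec \<beta> = int_vec \<alpha>"
proof -
  have "witt_monomial \<alpha> 1 \<noteq> (\<lambda>\<gamma>. 0 :: 'k^'n)"
    by (simp add: witt_monomial_def fun_eq_iff)
  then have "\<sigma> (witt_monomial \<alpha> 1) \<noteq> (\<lambda>\<gamma>. 0)"
    by (rule witt_lie_aut_nonzero[OF \<sigma> subsetD[OF xH_subset_witt witt_monomial_xH]])
  then obtain \<beta> where "\<sigma> (witt_monomial \<alpha> 1) \<beta> \<noteq> 0" by (auto simp: fun_eq_iff)
  then show ?thesis by (intro that witt_lie_aut_weight[OF \<sigma> witt_monomial_xH])
qed

lemma bij_betw_image_eq_if_inv_into_image_subset:
  assumes bij: "bij_betw f A A" and "Y \<subseteq> A" "f ` X \<subseteq> Y" "inv_into A f ` Y \<subseteq> X"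
  shows "f ` X = Y"
proof (rule equalityI)
  show "Y \<subseteq> f ` X"
  proof
    fix y assume "y \<in> Y"
    then have "y = f (inv_into A f y)" "inv_into A f y \<in> X"
      using assms bij_betw_inv_into_right[OF bij] by auto
    then show "y \<in> f ` X" by (rule image_eqI)
  qed
qed (rule assms(3))

theorem lemma2p6:
  fixes \<sigma> :: "(int^'n \<Rightarrow> 'k::field_char_0^'n) \<Rightarrow> (int^'n \<Rightarrow> 'k^'n)"
    and \<alpha> :: "int^'n"
  assumes "witt_lie_aut \<sigma>"
  shows "\<exists>\<beta> :: int^'n. int_vec \<beta> = Amat (inv_into witt \<sigma>) *v int_vec \<alpha>
           \<and> \<sigma> ` xH \<alpha> = xH \<beta>"
proof -
  let ?\<tau> = "inv_into witt \<sigma>"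
  have \<sigma>: "witt_lie_aut \<sigma>" and \<tau>: "witt_lie_aut ?\<tau>"
    using assms witt_lie_aut_inv_into[OF assms] by simp_all
  have bij: "bij_betw \<sigma> witt witt" using assms by (simp add: witt_lie_aut_def)
  have BA: "Amat ?\<tau> ** Amat \<sigma> = mat 1"
    by (rule Amat_mult_eq_1[OF \<sigma> \<tau> bij_betw_inv_into_right[OF bij]])
  have AB: "Amat \<sigma> ** Amat ?\<tau> = mat 1"
    by (rule Amat_mult_eq_1[OF \<tau> \<sigma> bij_betw_inv_into_left[OF bij]])
  obtain \<beta> where A\<beta>: "Amat \<sigma> *v int_vec \<beta> = int_vec \<alpha>"
    using witt_lie_aut_weight_preimage[OF \<sigma>] .
  then have B\<alpha>: "Amat ?\<tau> *v int_vec \<alpha> = int_vec \<beta>"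
    unfolding A\<beta>[symmetric] by (simp add: matrix_vector_mul_assoc BA)
  have "\<sigma> ` xH \<alpha> = xH \<beta>"
    using bij xH_subset_witt witt_lie_aut_image_xH_subset[OF \<sigma> BA B\<alpha>]
      witt_lie_aut_image_xH_subset[OF \<tau> AB A\<beta>]
    by (rule bij_betw_image_eq_if_inv_into_image_subset)
  with B\<alpha> show ?thesis by (intro exI[of _ \<beta>]) simp
qed

end
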